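(* Let $\alpha: I\to M$ be a unit-speed curve on an oriented surface $M\subset E^3$ with Darboux frame $\{T,V,U\}$ and curvatures $k_g,k_n,\tau_g$. Consider the curve $\gamma$ defined in either of the following two cases: (a) $\tau_g\equiv0$, $k_g$ and $k_n$ nowhere zero, and $\gamma(s)=\alpha(s)+\frac{1}{k_n(s)}U(s)$; (b) $\tau_g$ nowhere zero, $\lambda$ an antiderivative of $k_gk_n/\tau_g$, $\Lambda$ an antiderivative of $e^{-\lambda}$, $c_9$ a real constant, $y_1=e^{\lambda}(c_9-\Lambda)$, $y_3=\frac{k_g}{\tau_g}y_1$, and $\gamma(s)=\alpha(s)+y_1(s)T(s)+y_3(s)U(s)$. In either case assume $\gamma$ is regular. Then $\gamma$ is a general helix if and only if $\alpha$ is an isophote curve on $M$.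
   Context: $M$ is an oriented surface in Euclidean 3-space $E^3$ and $\alpha:I\to M$ is a unit-speed curve with arc-length parameter $s$. Its Darboux frame $\{T,V,U\}$ consists of the unit tangent $T=\alpha'$, the unit surface normal $U$ of $M$ along $\alpha$, and $V=U\times T$; it satisfies $T'=k_gV+k_nU$, $V'=-k_gT+\tau_gU$, $U'=-k_nT-\tau_gV$, where $k_g,k_n,\tau_g$ are the geodesic curvature, normal curvature and geodesic torsion. A regular curve is a general helix if its unit tangent makes a constant angle with a fixed direction. $\alpha$ is an isophote curve if $\langle U,l\rangle$ is constant for some fixed unit vector $l$. *)

theory Defs
  imports "HOL-Analysis.Analysis" "HOL-Analysis.Cross3"
begin

definition darboux_frame ::
  "real set \<Rightarrow> (real \<Rightarrow> real^3) \<Rightarrow> (real \<Rightarrow> real^3) \<Rightarrow> (real \<Rightarrow> real^3) \<Rightarrow> (real \<Rightarrow> real^3)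
   \<Rightarrow> (real \<Rightarrow> real) \<Rightarrow> (real \<Rightarrow> real) \<Rightarrow> (real \<Rightarrow> real) \<Rightarrow> bool" where
  "darboux_frame I \<alpha> T V U kg kn tg \<longleftrightarrow>
     (\<forall>s\<in>I.
        (\<alpha> has_vector_derivative T s) (at s) \<and>
        norm (T s) = 1 \<and> norm (U s) = 1 \<and> T s \<bullet> U s = 0 \<and>
        V s = cross3 (U s) (T s) \<and>
        (T has_vector_derivative (kg s *\<^sub>R V s + kn s *\<^sub>R U s)) (at s) \<and>
        (V has_vector_derivative (- kg s *\<^sub>R T s + tg s *\<^sub>R U s)) (at s) \<and>
        (U has_vector_derivative (- kn s *\<^sub>R T s - tg s *\<^sub>R V s)) (at s))"

definition regular_curve :: "real set \<Rightarrow> (real \<Rightarrow> real^3) \<Rightarrow> bool" where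
  "regular_curve I \<gamma> \<longleftrightarrow>
     (\<forall>s\<in>I. \<gamma> differentiable (at s) \<and> vector_derivative \<gamma> (at s) \<noteq> 0)"

definition general_helix :: "real set \<Rightarrow> (real \<Rightarrow> real^3) \<Rightarrow> bool" where
  "general_helix I \<gamma> \<longleftrightarrow> regular_curve I \<gamma> \<and>
     (\<exists>d c. norm d = 1 \<and>
        (\<forall>s\<in>I. (vector_derivative \<gamma> (at s) /\<^sub>R norm (vector_derivative \<gamma> (at s))) \<bullet> d = c))"

definition isophote_curve :: "real set \<Rightarrow> (real \<Rightarrow> real^3) \<Rightarrow> bool" where
  "isophote_curve I U \<longleftrightarrow> (\<exists>l c. norm l = 1 \<and> (\<forall>s\<in>I. U s \<bullet> l = c))"

end

theory Submission
  imports Defs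
begin

(* In both cases the T- and V-components of gamma' cancel, so gamma' = g U with g nowhere zero
   by regularity, and the unit tangent of gamma is sgn(g) U. If it makes a constant angle with d,
   then U . d only takes the values c and -c, hence is constant by continuity. Conversely, if
   U . l = c with c nonzero, then gamma . l has derivative c g, which never vanishes; by Darboux's
   theorem g has constant sign, so the unit tangent makes a constant angle with l. *)

lemma DERIV_sign_change_imp_zero:
  fixes f f' :: "real \<Rightarrow> real"
  assumes "a < b"
    and der: "\<And>x. x \<in> {a..b} \<Longrightarrow> (f has_real_derivative f' x) (at x)"
    and "f' a > 0" "f' b < 0"
  obtains c where "a < c" "c < b" "f' c = 0"
proof -
  have "continuous_on {a..b} f"
    using der by (meson DERIV_isCont continuous_at_imp_continuous_on)
  then obtain c where c: "c \<in> {a..b}" and max: "\<And>y. y \<in> {a..b} \<Longrightarrow> f y \<le> f c"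
    using continuous_attains_sup[of "{a..b}" f] \<open>a < b\<close> by auto
  obtain d1 where "d1 > 0" and d1: "\<And>h. 0 < h \<Longrightarrow> h < d1 \<Longrightarrow> f a < f (a + h)"
    using DERIV_pos_inc_right[OF der \<open>f' a > 0\<close>] \<open>a < b\<close> by auto
  obtain d2 where "d2 > 0" and d2: "\<And>h. 0 < h \<Longrightarrow> h < d2 \<Longrightarrow> f b < f (b - h)"
    using DERIV_neg_dec_left[OF der \<open>f' b < 0\<close>] \<open>a < b\<close> by auto
  define h where "h = min (min d1 d2) (b - a) / 2"
  have "0 < h" "h < d1" "h < d2" "h < b - a"
    using \<open>d1 > 0\<close> \<open>d2 > 0\<close> \<open>a < b\<close> by (auto simp: h_def)
  then have "f a < f c" "f b < f c"
    using d1[of h] d2[of h] max[of "a + h"] max[of "b - h"] by auto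
  then have "a < c" "c < b"
    using c by (auto simp: order.order_iff_strict)
  moreover have "f' c = 0"
    by (rule DERIV_local_max[OF der, of c "min (c - a) (b - c)"])
       (use \<open>a < c\<close> \<open>c < b\<close> max in \<open>auto simp: abs_if\<close>)
  ultimately show thesis
    using that by blast
qed

lemma DERIV_nonzero_on_interval_sign:
  fixes f f' :: "real \<Rightarrow> real"
  assumes J: "is_interval J"
    and der: "\<And>x. x \<in> J \<Longrightarrow> (f has_real_derivative f' x) (at x)"
    and nz: "\<And>x. x \<in> J \<Longrightarrow> f' x \<noteq> 0"
  shows "(\<forall>x\<in>J. f' x > 0) \<or> (\<forall>x\<in>J. f' x < 0)"
proof (rule ccontr)
  assume "\<not> ?thesis"
  then obtain x y where "x \<in> J" "y \<in> J" "\<not> f' x < 0" "\<not> f' y > 0"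
    by auto
  with nz have xy: "x \<in> J" "y \<in> J" "f' x > 0" "f' y < 0"
    by (simp_all add: order.not_eq_order_implies_strict)
  have sub: "{a..b} \<subseteq> J" if "a \<in> J" "b \<in> J" for a b
    using J that by (meson atLeastAtMost_iff is_interval_1 subsetI)
  obtain c where "c \<in> J" "f' c = 0"
  proof (cases "x < y")
    case True
    have "\<And>t. t \<in> {x..y} \<Longrightarrow> (f has_real_derivative f' t) (at t)"
      using der sub[of x y] xy by blast
    then obtain c where "x < c" "c < y" "f' c = 0"
      using DERIV_sign_change_imp_zero[of x y f f'] True xy by blast
    then show thesis
      using that sub[of x y] xy by (meson atLeastAtMost_iff less_imp_le subsetD)
  next
    case False
    with xy have "y < x"
      by (cases "x = y") auto
    have "((\<lambda>t. - f t) has_real_derivative - f' t) (at t)" if "t \<in> {y..x}" for t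
      using DERIV_minus[OF der] sub[of y x] xy that by blast
    then obtain c where "y < c" "c < x" "f' c = 0"
      using DERIV_sign_change_imp_zero[of y x "\<lambda>t. - f t" "\<lambda>t. - f' t"] \<open>y < x\<close> xy
      by auto
    then show thesis
      using that sub[of y x] xy by (meson atLeastAtMost_iff less_imp_le subsetD)
  qed
  with nz show False
    by blast
qed

lemma general_helix_iff_isophote_if_velocity_normal:
  fixes \<gamma> U :: "real \<Rightarrow> real^3" and g :: "real \<Rightarrow> real"
  assumes I: "is_interval I"
    and velocity: "\<And>s. s \<in> I \<Longrightarrow> (\<gamma> has_vector_derivative g s *\<^sub>R U s) (at s)"
    and unit: "\<And>s. s \<in> I \<Longrightarrow> norm (U s) = 1"
    and cont: "continuous_on I U"
    and reg: "regular_curve I \<gamma>"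
  shows "general_helix I \<gamma> \<longleftrightarrow> isophote_curve I U"
proof -
  have vd: "vector_derivative \<gamma> (at s) = g s *\<^sub>R U s" if "s \<in> I" for s
    using velocity[OF that] by (rule vector_derivative_at)
  have g_nz: "g s \<noteq> 0" if "s \<in> I" for s
    using reg that vd[OF that] by (auto simp: regular_curve_def)
  have tangent: "vector_derivative \<gamma> (at s) /\<^sub>R norm (vector_derivative \<gamma> (at s)) = sgn (g s) *\<^sub>R U s"
    if "s \<in> I" for s
    using that vd unit by (simp add: sgn_div_norm)
  have "general_helix I \<gamma> \<longleftrightarrow> (\<exists>d c. norm d = 1 \<and> (\<forall>s\<in>I. sgn (g s) * (U s \<bullet> d) = c))"
    using reg tangent by (simp add: general_helix_def)
  also have "\<dots> \<longleftrightarrow> isophote_curve I U"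
  proof
    assume "\<exists>d c. norm d = 1 \<and> (\<forall>s\<in>I. sgn (g s) * (U s \<bullet> d) = c)"
    then obtain d c where d: "norm d = 1" and c: "\<And>s. s \<in> I \<Longrightarrow> sgn (g s) * (U s \<bullet> d) = c"
      by blast
    have "U s \<bullet> d = sgn (g s) * c" if "s \<in> I" for s
      using c[OF that] g_nz[OF that] by (auto simp: sgn_real_def)
    then have "(\<lambda>s. U s \<bullet> d) ` I \<subseteq> {c, - c}"
      using g_nz by (auto simp: sgn_real_def)
    then have "finite ((\<lambda>s. U s \<bullet> d) ` I)"
      by (rule finite_subset) simp
    moreover have "continuous_on I (\<lambda>s. U s \<bullet> d)"
      using cont by (intro continuous_intros)
    ultimately have "(\<lambda>s. U s \<bullet> d) constant_on I"
      using I by (intro continuous_finite_range_constant) (simp_all add: is_interval_connected)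
    with d show "isophote_curve I U"
      by (auto simp: isophote_curve_def constant_on_def)
  next
    assume "isophote_curve I U"
    then obtain l c where l: "norm l = 1" and c: "\<And>s. s \<in> I \<Longrightarrow> U s \<bullet> l = c"
      by (auto simp: isophote_curve_def)
    show "\<exists>d c. norm d = 1 \<and> (\<forall>s\<in>I. sgn (g s) * (U s \<bullet> d) = c)"
    proof (cases "c = 0")
      case True
      with l c show ?thesis by auto
    next
      case False
      \<comment> \<open>g need not be continuous, but c g is a derivative, so Darboux's theorem applies.\<close>
      have "((\<lambda>s. \<gamma> s \<bullet> l) has_real_derivative c * g s) (at s)" if "s \<in> I" for s
      proof -
        have "((\<lambda>s. \<gamma> s \<bullet> l) has_vector_derivative (g s *\<^sub>R U s) \<bullet> l) (at s)"
          by (rule bounded_linear.has_vector_derivative[OF bounded_linear_inner_left velocity[OF that]])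
        then show ?thesis
          using c[OF that] by (simp add: has_real_derivative_iff_has_vector_derivative mult.commute)
      qed
      moreover have "c * g s \<noteq> 0" if "s \<in> I" for s
        using False g_nz[OF that] by simp
      ultimately have "(\<forall>s\<in>I. c * g s > 0) \<or> (\<forall>s\<in>I. c * g s < 0)"
        by (rule DERIV_nonzero_on_interval_sign[OF I])
      then obtain \<sigma> where \<sigma>: "\<And>s. s \<in> I \<Longrightarrow> sgn (c * g s) = \<sigma>"
        by (elim disjE) (auto intro: that[of 1] that[of "-1"])
      have "sgn (g s) * (U s \<bullet> l) = \<sigma> * \<bar>c\<bar>" if "s \<in> I" for s
        using \<sigma>[OF that] c[OF that] by (auto simp: sgn_mult abs_sgn)
      with l show ?thesis by blast
    qed
  qed
  finally show ?thesis .
qed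

lemma darboux_frame_offset_curve_derivative:
  fixes \<alpha> T V U \<gamma> :: "real \<Rightarrow> real^3" and kg kn tg x z :: "real \<Rightarrow> real"
  assumes I: "open I"
    and frame: "darboux_frame I \<alpha> T V U kg kn tg"
    and s: "s \<in> I"
    and curve: "\<And>t. t \<in> I \<Longrightarrow> \<gamma> t = \<alpha> t + x t *\<^sub>R T t + z t *\<^sub>R U t"
    and x: "(x has_real_derivative x') (at s)"
    and z: "(z has_real_derivative z') (at s)"
  shows "(\<gamma> has_vector_derivative
            (1 + x' - z s * kn s) *\<^sub>R T s + (x s * kg s - z s * tg s) *\<^sub>R V s
            + (x s * kn s + z') *\<^sub>R U s) (at s)"
proof -
  have "(\<alpha> has_vector_derivative T s) (at s)"
    and "(T has_vector_derivative (kg s *\<^sub>R V s + kn s *\<^sub>R U s)) (at s)"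
    and "(U has_vector_derivative (- kn s *\<^sub>R T s - tg s *\<^sub>R V s)) (at s)"
    using frame s by (auto simp: darboux_frame_def)
  then have "((\<lambda>t. \<alpha> t + x t *\<^sub>R T t + z t *\<^sub>R U t) has_vector_derivative
      T s + (x s *\<^sub>R (kg s *\<^sub>R V s + kn s *\<^sub>R U s) + x' *\<^sub>R T s)
      + (z s *\<^sub>R (- kn s *\<^sub>R T s - tg s *\<^sub>R V s) + z' *\<^sub>R U s)) (at s)"
    by (intro has_vector_derivative_add has_vector_derivative_scaleR x z)
  then have "((\<lambda>t. \<alpha> t + x t *\<^sub>R T t + z t *\<^sub>R U t) has_vector_derivative
      (1 + x' - z s * kn s) *\<^sub>R T s + (x s * kg s - z s * tg s) *\<^sub>R V s
      + (x s * kn s + z') *\<^sub>R U s) (at s)"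
    by (simp add: algebra_simps)
  then show ?thesis
    by (rule has_vector_derivative_transform_within_open[OF _ I s]) (simp add: curve)
qed

lemma focal_curve_velocity:
  fixes \<alpha> T V U \<gamma> :: "real \<Rightarrow> real^3" and kg kn tg :: "real \<Rightarrow> real"
  assumes I: "open I"
    and frame: "darboux_frame I \<alpha> T V U kg kn tg"
    and s: "s \<in> I"
    and "tg s = 0" "kn s \<noteq> 0" "kn differentiable (at s)"
    and curve: "\<And>t. t \<in> I \<Longrightarrow> \<gamma> t = \<alpha> t + (1 / kn t) *\<^sub>R U t"
  shows "(\<gamma> has_vector_derivative (- deriv kn s / kn s ^ 2) *\<^sub>R U s) (at s)"
proof -
  have dz: "((\<lambda>t. 1 / kn t) has_real_derivative - deriv kn s / kn s ^ 2) (at s)"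
    using DERIV_inverse_fun[of kn "deriv kn s" s] assms(5,6)
    by (simp add: DERIV_deriv_iff_real_differentiable inverse_eq_divide power2_eq_square)
  have "\<gamma> t = \<alpha> t + 0 *\<^sub>R T t + (1 / kn t) *\<^sub>R U t" if "t \<in> I" for t
    using curve[OF that] by simp
  from darboux_frame_offset_curve_derivative[OF I frame s this DERIV_const dz]
  show ?thesis
    using assms(4,5) by simp
qed

(* y1 = e^lam (c9 - Lam) solves y1' = (kg kn / tg) y1 - 1, which together with y3 = (kg / tg) y1
   is exactly what cancels the T- and V-components of gamma'. *)
lemma offset_curve_velocity_if_geodesic_torsion_nonzero:
  fixes \<alpha> T V U \<gamma> :: "real \<Rightarrow> real^3" and kg kn tg lam Lam y1 y3 :: "real \<Rightarrow> real"
  assumes I: "open I"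
    and frame: "darboux_frame I \<alpha> T V U kg kn tg"
    and s: "s \<in> I"
    and "tg s \<noteq> 0" "kg differentiable (at s)" "tg differentiable (at s)"
    and lam: "(lam has_real_derivative kg s * kn s / tg s) (at s)"
    and Lam: "(Lam has_real_derivative exp (- lam s)) (at s)"
    and y1: "\<And>t. t \<in> I \<Longrightarrow> y1 t = exp (lam t) * (c9 - Lam t)"
    and y3: "\<And>t. t \<in> I \<Longrightarrow> y3 t = kg t / tg t * y1 t"
    and curve: "\<And>t. t \<in> I \<Longrightarrow> \<gamma> t = \<alpha> t + y1 t *\<^sub>R T t + y3 t *\<^sub>R U t"
  shows "(\<gamma> has_vector_derivative (y1 s * kn s + deriv y3 s) *\<^sub>R U s) (at s)"
proof -
  define Y1 where "Y1 t = exp (lam t) * (c9 - Lam t)" for t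
  define Y3 where "Y3 t = kg t / tg t * Y1 t" for t
  have dY1: "(Y1 has_real_derivative kg s * kn s / tg s * Y1 s - 1) (at s)"
  proof -
    have "(Y1 has_real_derivative
        exp (lam s) * (kg s * kn s / tg s) * (c9 - Lam s) + exp (lam s) * (- exp (- lam s))) (at s)"
      unfolding Y1_def using lam Lam by (auto intro!: derivative_eq_intros)
    then show ?thesis
      by (simp add: Y1_def exp_minus field_simps)
  qed
  have "(kg has_real_derivative deriv kg s) (at s)" "(tg has_real_derivative deriv tg s) (at s)"
    using assms(5,6) by (simp_all add: DERIV_deriv_iff_real_differentiable)
  then obtain Y3' where dY3: "(Y3 has_real_derivative Y3') (at s)"
    using DERIV_mult[OF DERIV_divide dY1] assms(4) unfolding Y3_def by blast
  have "deriv y3 s = Y3'"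
    using has_field_derivative_transform_within_open[OF dY3 I s, of y3] y1 y3
    by (intro DERIV_imp_deriv) (simp add: Y1_def Y3_def)
  moreover have "(\<gamma> has_vector_derivative
            (1 + (kg s * kn s / tg s * Y1 s - 1) - Y3 s * kn s) *\<^sub>R T s
            + (Y1 s * kg s - Y3 s * tg s) *\<^sub>R V s + (Y1 s * kn s + Y3') *\<^sub>R U s) (at s)"
    using darboux_frame_offset_curve_derivative[OF I frame s _ dY1 dY3] curve y1 y3
    by (simp add: Y1_def Y3_def)
  ultimately show ?thesis
    using assms(4) y1[OF s] by (simp add: Y1_def Y3_def)
qed

theorem theorem3p27:
  fixes I :: "real set"
    and \<alpha> T V U \<gamma> :: "real \<Rightarrow> real^3"
    and kg kn tg :: "real \<Rightarrow> real"
  assumes I: "open I" "is_interval I"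
    and frame: "darboux_frame I \<alpha> T V U kg kn tg"
    and smooth: "\<forall>s\<in>I. kg differentiable (at s) \<and> kn differentiable (at s) \<and> tg differentiable (at s)"
    and cases:
      "((\<forall>s\<in>I. tg s = 0 \<and> kg s \<noteq> 0 \<and> kn s \<noteq> 0) \<and>
        (\<forall>s\<in>I. \<gamma> s = \<alpha> s + (1 / kn s) *\<^sub>R U s))
       \<or>
       ((\<forall>s\<in>I. tg s \<noteq> 0) \<and>
        (\<exists>lam Lam c9 y1 y3.
           (\<forall>s\<in>I. (lam has_real_derivative (kg s * kn s / tg s)) (at s)) \<and>
           (\<forall>s\<in>I. (Lam has_real_derivative exp (- lam s)) (at s)) \<and>
           (\<forall>s\<in>I. y1 s = exp (lam s) * (c9 - Lam s)) \<and>
           (\<forall>s\<in>I. y3 s = kg s / tg s * y1 s) \<and>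
           (\<forall>s\<in>I. \<gamma> s = \<alpha> s + y1 s *\<^sub>R T s + y3 s *\<^sub>R U s)))"
    and reg: "regular_curve I \<gamma>"
  shows "general_helix I \<gamma> \<longleftrightarrow> isophote_curve I U"
proof -
  have unit: "norm (U s) = 1" if "s \<in> I" for s
    using frame that by (simp add: darboux_frame_def)
  have "continuous_on I U"
    using frame unfolding darboux_frame_def
    by (meson continuous_at_imp_continuous_on has_vector_derivative_continuous)
  obtain g where "\<And>s. s \<in> I \<Longrightarrow> (\<gamma> has_vector_derivative g s *\<^sub>R U s) (at s)"
    using cases
  proof (elim disjE conjE exE)
    assume "\<forall>s\<in>I. tg s = 0 \<and> kg s \<noteq> 0 \<and> kn s \<noteq> 0"
      and "\<forall>s\<in>I. \<gamma> s = \<alpha> s + (1 / kn s) *\<^sub>R U s"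
    with smooth show thesis
      by (intro that[of "\<lambda>s. - deriv kn s / kn s ^ 2"] focal_curve_velocity[OF I(1) frame]) auto
  next
    fix lam Lam c9 y1 y3
    assume "\<forall>s\<in>I. tg s \<noteq> 0"
      and "\<forall>s\<in>I. (lam has_real_derivative (kg s * kn s / tg s)) (at s)"
      and "\<forall>s\<in>I. (Lam has_real_derivative exp (- lam s)) (at s)"
      and "\<forall>s\<in>I. y1 s = exp (lam s) * (c9 - Lam s)"
      and "\<forall>s\<in>I. y3 s = kg s / tg s * y1 s"
      and "\<forall>s\<in>I. \<gamma> s = \<alpha> s + y1 s *\<^sub>R T s + y3 s *\<^sub>R U s"
    with smooth show thesis
      by (intro that[of "\<lambda>s. y1 s * kn s + deriv y3 s"] offset_curve_velocity_if_geodesic_torsion_nonzero[OF I(1) frame])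
         auto
  qed
  then show ?thesis
    using general_helix_iff_isophote_if_velocity_normal I(2) unit \<open>continuous_on I U\<close> reg
    by blast
qed

end
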